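(* Let $H$ be an ASC-hypergraph, $Y\in H$, $Z=\bigcup H\setminus Y$, and let $K$ and $J$ be constructions of $H_Y$ and ${}_Z H$ respectively. Then the continuation $K\ast J=K\cup\{X\cup_H Y\mid X\in J\}$ is a construction of $H$.
   Context: A hypergraph is a finite set $H$ of nonempty subsets of some finite set; its carrier is $\bigcup H$. For a family $F$ and set $Y$, $F_Y=\{X\in F\mid X\subseteq Y\}$, and ${}_Z F=\{X\cap Z\mid X\in F,\ X\cap Z\neq\emptyset\}$. For $X\subseteq\bigcup H$, $X\cup_H Y=X\cup Y$ if $X\cup Y\in H$, and $X\cup_H Y=X$ otherwise. A hypergraph partition of $H$ is a partition $\{H_1,\dots,H_n\}$ ($n\ge0$) of the set $H$ with $\{\bigcup H_1,\dots,\bigcup H_n\}$ a partition of $\bigcup H$; $H$ is connected if it has exactly one hypergraph partition; the finest hypergraph partition is the unique one whose blocks are connected. $H$ is atomic if $\{x\}\in H$ for all $x\in\bigcup H$; saturated if $X_1,X_2\in H$ with $X_1\cap X_2\neq\emptyset$ imply $X_1\cup X_2\in H$. An ASC-hypergraph is one that is atomic, saturated and connected (for such $H$, $H_Y$ and ${}_Z H$ are ASC-hypergraphs). Constructions of an atomic $H$, by induction on $|\bigcup H|$: (0) $\emptyset$ is the only construction of $\emptyset$; (1) if $|\bigcup H|\ge1$, $H$ connected, $x\in\bigcup H$, $K$ a construction of $H_{\bigcup H\setminus\{x\}}$, then $K\cup\{\bigcup H\}$ is a construction of $H$; (2) if $H$ is not connected with finest hypergraph partition $\{H_1,\dots,H_n\}$,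 $n\ge2$, and $K_i$ is a construction of $H_i$, then $K_1\cup\dots\cup K_n$ is a construction of $H$. *)

theory Defs
  imports Main
begin

definition hypergraph :: "'a set set \<Rightarrow> bool" where
  "hypergraph H \<longleftrightarrow> finite H \<and> (\<forall>X\<in>H. X \<noteq> {} \<and> finite X)"

definition restr :: "'a set set \<Rightarrow> 'a set \<Rightarrow> 'a set set" where
  "restr F Y = {X \<in> F. X \<subseteq> Y}"

definition trace :: "'a set \<Rightarrow> 'a set set \<Rightarrow> 'a set set" where
  "trace Z F = {X \<inter> Z | X. X \<in> F \<and> X \<inter> Z \<noteq> {}}"

definition hunion :: "'a set set \<Rightarrow> 'a set \<Rightarrow> 'a set \<Rightarrow> 'a set" where
  "hunion H X Y = (if X \<union> Y \<in> H then X \<union> Y else X)"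

definition hyp_partition :: "'a set set \<Rightarrow> 'a set set set \<Rightarrow> bool" where
  "hyp_partition H P \<longleftrightarrow>
     (\<forall>B\<in>P. B \<noteq> {}) \<and> \<Union>P = H \<and>
     (\<forall>B1\<in>P. \<forall>B2\<in>P. B1 \<noteq> B2 \<longrightarrow> B1 \<inter> B2 = {}) \<and>
     (\<forall>B\<in>P. \<Union>B \<noteq> {}) \<and> (\<Union>B\<in>P. \<Union>B) = \<Union>H \<and>
     (\<forall>B1\<in>P. \<forall>B2\<in>P. B1 \<noteq> B2 \<longrightarrow> \<Union>B1 \<inter> \<Union>B2 = {})"

definition hconnected :: "'a set set \<Rightarrow> bool" where
  "hconnected H \<longleftrightarrow> (\<exists>!P. hyp_partition H P)"

definition finest_partition :: "'a set set \<Rightarrow> 'a set set set \<Rightarrow> bool" where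
  "finest_partition H P \<longleftrightarrow> hyp_partition H P \<and> (\<forall>B\<in>P. hconnected B)"

definition atomic :: "'a set set \<Rightarrow> bool" where
  "atomic H \<longleftrightarrow> (\<forall>x\<in>\<Union>H. {x} \<in> H)"

definition saturated :: "'a set set \<Rightarrow> bool" where
  "saturated H \<longleftrightarrow> (\<forall>X1\<in>H. \<forall>X2\<in>H. X1 \<inter> X2 \<noteq> {} \<longrightarrow> X1 \<union> X2 \<in> H)"

definition ASC :: "'a set set \<Rightarrow> bool" where
  "ASC H \<longleftrightarrow> hypergraph H \<and> atomic H \<and> saturated H \<and> hconnected H"

inductive construction :: "'a set set \<Rightarrow> 'a set set \<Rightarrow> bool" where
  empty: "construction {} {}"
| conn: "\<lbrakk> hypergraph H; atomic H; card (\<Union>H) \<ge> 1; hconnected H; x \<in> \<Union>H;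
           construction (restr H (\<Union>H - {x})) K \<rbrakk>
         \<Longrightarrow> construction H (K \<union> {\<Union>H})"
| disconn: "\<lbrakk> hypergraph H; atomic H; \<not> hconnected H; finest_partition H P; card P \<ge> 2;
              \<forall>B\<in>P. construction B (Kf B) \<rbrakk>
         \<Longrightarrow> construction H (\<Union>B\<in>P. Kf B)"

end

theory Submission
  imports Defs
begin

(* Induction gives a construction of H_{\<Union>H-{x}}, and Z \<union>_H Y = \<Union>H completes it by rule (1).
   - If \<Union>H \<notin> H, the finest partition of the saturated hypergraph H consists of its components
     H_M (M a maximal edge), and the traces of the components form the finest partition of
     _Z H.  Induction handles the component of Y; the continuation fixes the other components. *)

lemma hyp_partitionD:
  assumes "hyp_partition G P"
  shows "\<Union>P = G" and "\<And>B. B \<in> P \<Longrightarrow> B \<noteq> {}"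
    and "\<And>B1 B2. B1 \<in> P \<Longrightarrow> B2 \<in> P \<Longrightarrow> B1 \<noteq> B2 \<Longrightarrow> B1 \<inter> B2 = {}"
    and "\<And>B1 B2. B1 \<in> P \<Longrightarrow> B2 \<in> P \<Longrightarrow> B1 \<noteq> B2 \<Longrightarrow> \<Union>B1 \<inter> \<Union>B2 = {}"
  using assms unfolding hyp_partition_def by simp_all

lemma hyp_partitionI:
  assumes "hypergraph G" "\<And>B. B \<in> P \<Longrightarrow> B \<noteq> {}" "\<Union>P = G"
    "\<And>B1 B2. B1 \<in> P \<Longrightarrow> B2 \<in> P \<Longrightarrow> B1 \<noteq> B2 \<Longrightarrow> \<Union>B1 \<inter> \<Union>B2 = {}"
  shows "hyp_partition G P"
proof -
  have edge_ne: "X \<noteq> {}" if "X \<in> G" for X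
    using assms(1) that unfolding hypergraph_def by blast
  have "B1 \<inter> B2 = {}" if B: "B1 \<in> P" "B2 \<in> P" "B1 \<noteq> B2" for B1 B2
  proof -
    have "X = {}" if "X \<in> B1" "X \<in> B2" for X
      using assms(4)[OF B] that by blast
    moreover have "X \<noteq> {}" if "X \<in> B1" for X
      using edge_ne assms(3) B(1) that by blast
    ultimately show ?thesis by blast
  qed
  moreover have "\<Union>B \<noteq> {}" if B: "B \<in> P" for B
  proof -
    obtain X where "X \<in> B" using assms(2)[OF B] by blast
    moreover have "X \<noteq> {}" using edge_ne assms(3) B \<open>X \<in> B\<close> by blast
    ultimately show ?thesis by blast
  qed
  moreover have "(\<Union>B\<in>P. \<Union>B) = \<Union>G"
    using assms(3) by auto
  ultimately show ?thesis
    using assms(2-4) unfolding hyp_partition_def by (intro conjI ballI impI) simp_all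
qed

lemma hyp_partition_single: "hypergraph G \<Longrightarrow> G \<noteq> {} \<Longrightarrow> hyp_partition G {G}"
  by (intro hyp_partitionI) auto

lemma hypergraph_subset: "hypergraph G \<Longrightarrow> B \<subseteq> G \<Longrightarrow> hypergraph B"
  unfolding hypergraph_def by (auto intro: finite_subset)

lemma hypergraph_finite_carrier: "hypergraph G \<Longrightarrow> finite (\<Union>G)"
  unfolding hypergraph_def by blast

(* A hypergraph containing its own carrier as an edge is connected: the block holding the
   top edge meets the carrier of every other block. *)
lemma hconnected_if_top:
  assumes "hypergraph G" "\<Union>G \<in> G"
  shows "hconnected G"
proof -
  have "hyp_partition G {G}" using assms by (intro hyp_partition_single) auto
  moreover have "P = {G}" if P: "hyp_partition G P" for P
  proof -
    obtain B0 where B0: "B0 \<in> P" "\<Union>G \<in> B0"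
      using assms(2) hyp_partitionD(1)[OF P] by blast
    have "B = B0" if B: "B \<in> P" for B
    proof (rule ccontr)
      assume "B \<noteq> B0"
      then have "\<Union>B \<inter> \<Union>B0 = {}" by (rule hyp_partitionD(4)[OF P B B0(1)])
      moreover have "B \<subseteq> G" using hyp_partitionD(1)[OF P] B by (metis Union_upper)
      then have "\<Union>B \<subseteq> \<Union>B0" using B0(2) by (metis Sup_subset_mono Union_upper subset_trans)
      moreover obtain X where "X \<in> B" using hyp_partitionD(2)[OF P B] by blast
      moreover have "X \<in> G" using \<open>X \<in> B\<close> \<open>B \<subseteq> G\<close> by blast
      then have "X \<noteq> {}" using assms(1) unfolding hypergraph_def by blast
      ultimately show False by blast
    qed
    then have "P = {B0}" using B0(1) by blast
    then show ?thesis using hyp_partitionD(1)[OF P] by simp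
  qed
  ultimately show ?thesis unfolding hconnected_def by (rule ex1I)
qed

lemma hconnected_unique:
  "hconnected G \<Longrightarrow> hyp_partition G P \<Longrightarrow> hyp_partition G Q \<Longrightarrow> P = Q"
  unfolding hconnected_def by blast

(* Each block of one finest partition lies inside a block of any other: intersecting a
   connected block with the second partition yields a partition of it, hence a trivial one. *)
lemma finest_block_below:
  assumes "hypergraph G" "finest_partition G P" "finest_partition G Q" "B \<in> P"
  shows "\<exists>B'\<in>Q. B \<subseteq> B'"
proof -
  have P: "hyp_partition G P" and Q: "hyp_partition G Q" and "hconnected B"
    using assms(2-4) unfolding finest_partition_def by auto
  have "B \<subseteq> G" using hyp_partitionD(1)[OF P] assms(4) by (metis Union_upper)
  then have hB: "hypergraph B" by (rule hypergraph_subset[OF assms(1)])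
  have "B \<noteq> {}" by (rule hyp_partitionD(2)[OF P assms(4)])
  define R where "R = {B \<inter> B' | B'. B' \<in> Q \<and> B \<inter> B' \<noteq> {}}"
  have "hyp_partition B R"
  proof (rule hyp_partitionI[OF hB])
    show "C \<noteq> {}" if "C \<in> R" for C using that unfolding R_def by blast
    show "\<Union>R = B"
    proof
      show "\<Union>R \<subseteq> B" unfolding R_def by blast
      show "B \<subseteq> \<Union>R"
      proof
        fix X assume "X \<in> B"
        then have "X \<in> \<Union>Q" using \<open>B \<subseteq> G\<close> hyp_partitionD(1)[OF Q] by auto
        then obtain C where "C \<in> Q" "X \<in> C" by blast
        then have "B \<inter> C \<in> R" using \<open>X \<in> B\<close> unfolding R_def by blast
        then show "X \<in> \<Union>R" using \<open>X \<in> B\<close> \<open>X \<in> C\<close> by blast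
      qed
    qed
    show "\<Union>R1 \<inter> \<Union>R2 = {}" if R12: "R1 \<in> R" "R2 \<in> R" "R1 \<noteq> R2" for R1 R2
    proof -
      obtain C1 C2 where C: "C1 \<in> Q" "C2 \<in> Q" "R1 = B \<inter> C1" "R2 = B \<inter> C2"
        using R12(1,2) unfolding R_def by blast
      have "C1 \<noteq> C2" using C(3,4) R12(3) by blast
      then have "\<Union>C1 \<inter> \<Union>C2 = {}" by (rule hyp_partitionD(4)[OF Q C(1,2)])
      then show ?thesis using C(3,4) by blast
    qed
  qed
  moreover have "hyp_partition B {B}" by (rule hyp_partition_single[OF hB \<open>B \<noteq> {}\<close>])
  ultimately have "R = {B}" by (rule hconnected_unique[OF \<open>hconnected B\<close>])
  then have "B \<in> R" by simp
  then obtain B' where "B' \<in> Q" "B = B \<inter> B'" unfolding R_def by blast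
  then show ?thesis by blast
qed

lemma finest_partition_unique:
  assumes "hypergraph G" "finest_partition G P" "finest_partition G Q"
  shows "P = Q"
proof -
  have "P \<subseteq> Q" if PQ: "finest_partition G P" "finest_partition G Q" for P Q
  proof
    fix B assume B: "B \<in> P"
    obtain B' where B': "B' \<in> Q" "B \<subseteq> B'"
      using finest_block_below[OF assms(1) PQ B] by blast
    obtain B'' where B'': "B'' \<in> P" "B' \<subseteq> B''"
      using finest_block_below[OF assms(1) PQ(2,1) B'(1)] by blast
    have P: "hyp_partition G P" using PQ(1) unfolding finest_partition_def by blast
    have "B \<inter> B'' \<noteq> {}" using hyp_partitionD(2)[OF P B] B'(2) B''(2) by blast
    then have "B = B''" using hyp_partitionD(3)[OF P B B''(1)] by blast
    then show "B \<in> Q" by (metis B'(1,2) B''(2) subset_antisym)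
  qed
  then show ?thesis using assms(2,3) by blast
qed

lemma finite_partition:
  assumes "hypergraph G" "hyp_partition G P"
  shows "finite P"
proof -
  have "P \<subseteq> Pow G" using hyp_partitionD(1)[OF assms(2)] by auto
  moreover have "finite G" using assms(1) unfolding hypergraph_def by blast
  ultimately show ?thesis by (rule finite_subset[OF _ finite_Pow_iff[THEN iffD2]])
qed

lemma construction_edges:
  assumes "construction G K" "X \<in> K"
  shows "X \<noteq> {}" and "X \<subseteq> \<Union>G"
proof -
  have "\<forall>X\<in>K. X \<noteq> {} \<and> X \<subseteq> \<Union>G"
    using assms(1)
  proof (induction rule: construction.induct)
    case (conn H x K)
    have "\<Union>H \<noteq> {}" using conn.hyps(3) by (metis card.empty not_one_le_zero)
    moreover have "\<Union>(restr H (\<Union>H - {x})) \<subseteq> \<Union>H" unfolding restr_def by blast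
    ultimately show ?case using conn.IH by fast
  next
    case (disconn H P Kf)
    have "\<Union>B \<subseteq> \<Union>H" if "B \<in> P" for B
      using that hyp_partitionD(1)[of H P] disconn.hyps(4)
      unfolding finest_partition_def by (metis Sup_subset_mono Union_upper)
    then show ?case using disconn.IH by fast
  qed simp
  then show "X \<noteq> {}" "X \<subseteq> \<Union>G" using assms(2) by blast+
qed

lemma construction_of_empty: "construction {} J \<Longrightarrow> J = {}"
proof (induction "{} :: 'a set set" J rule: construction.induct)
  case (disconn P Kf)
  have "P = {}"
    using disconn.hyps(4) hyp_partitionD(1,2)[of "{}" P] unfolding finest_partition_def by blast
  then show ?case by simp
qed simp_all

lemma construction_of_full:
  assumes "construction G K" "\<Union>G \<in> G"
  obtains x K' where "x \<in> \<Union>G" "construction (restr G (\<Union>G - {x})) K'" "K = K' \<union> {\<Union>G}"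
  using assms(1)
proof (cases rule: construction.cases)
  case empty
  then show ?thesis using assms(2) by simp
next
  case (conn x K')
  then show ?thesis using that by blast
next
  case (disconn P Kf)
  then show ?thesis using hconnected_if_top assms(2) by blast
qed

(* Allowing the empty block in the index set makes the lemma applicable to images of
   partitions (such as the traces of the blocks), where {} may occur. *)
lemma construction_decomp:
  assumes "construction G K" "finest_partition G (P - {{}})"
  obtains Kf where "\<And>B. B \<in> P \<Longrightarrow> construction B (Kf B)" "K = (\<Union>B\<in>P. Kf B)"
  using assms(1)
proof (cases rule: construction.cases)
  case empty
  then have "P \<subseteq> {{}}"
    using assms(2) hyp_partitionD(1,2)[of "{}" "P - {{}}"] unfolding finest_partition_def by blast
  then show ?thesis using that[of "\<lambda>_. {}"] construction.empty empty(2) by blast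
next
  case (conn x K')
  have "P - {{}} = {G}"
  proof (rule hconnected_unique[OF conn(5)])
    show "hyp_partition G (P - {{}})" using assms(2) unfolding finest_partition_def by blast
    have "G \<noteq> {}" using conn(4) by (metis Union_empty card.empty not_one_le_zero)
    then show "hyp_partition G {G}" by (rule hyp_partition_single[OF conn(2)])
  qed
  define Kf where "Kf B = (if B = G then K else {})" for B
  show ?thesis
  proof (rule that)
    show "construction B (Kf B)" if "B \<in> P" for B
    proof (cases "B = G")
      case True
      then show ?thesis using assms(1) unfolding Kf_def by simp
    next
      case False
      then have "B = {}" using \<open>P - {{}} = {G}\<close> \<open>B \<in> P\<close> by blast
      then show ?thesis using False construction.empty unfolding Kf_def by simp
    qed
    have "G \<in> P" using \<open>P - {{}} = {G}\<close> by blast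
    then show "K = (\<Union>B\<in>P. Kf B)" unfolding Kf_def by auto
  qed
next
  case (disconn Q Kf)
  have "P - {{}} = Q" by (rule finest_partition_unique[OF disconn(2) assms(2) disconn(5)])
  show ?thesis
  proof (rule that)
    show "construction B (if B = {} then {} else Kf B)" if "B \<in> P" for B
      using disconn(7) \<open>P - {{}} = Q\<close> \<open>B \<in> P\<close> construction.empty by auto
    show "K = (\<Union>B\<in>P. if B = {} then {} else Kf B)"
      using disconn(1) \<open>P - {{}} = Q\<close> by auto
  qed
qed

lemma construction_from_blocks:
  assumes "hypergraph G" "atomic G" "finest_partition G P" "\<And>B. B \<in> P \<Longrightarrow> construction B (Kf B)"
  shows "construction G (\<Union>B\<in>P. Kf B)"
proof -
  have P: "hyp_partition G P" using assms(3) unfolding finest_partition_def by blast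
  consider "card P = 0" | "card P = 1" | "card P \<ge> 2" by linarith
  then show ?thesis
  proof cases
    case 1
    then have "P = {}" using finite_partition[OF assms(1) P] by simp
    moreover have "G = {}" using hyp_partitionD(1)[OF P] \<open>P = {}\<close> by simp
    ultimately show ?thesis using construction.empty by simp
  next
    case 2
    then obtain B where "P = {B}" by (rule card_1_singletonE)
    moreover have "G = B" using hyp_partitionD(1)[OF P] \<open>P = {B}\<close> by simp
    ultimately show ?thesis using assms(4) by simp
  next
    case 3
    have "\<not> hconnected G"
    proof
      assume "hconnected G"
      moreover obtain B where "B \<in> P" using 3 by fastforce
      then have "G \<noteq> {}" using hyp_partitionD(1,2)[OF P] by blast
      then have "hyp_partition G {G}" by (rule hyp_partition_single[OF assms(1)])
      ultimately have "P = {G}" using hconnected_unique[OF _ P] by blast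
      then show False using 3 by simp
    qed
    then show ?thesis using construction.disconn[OF assms(1,2) _ assms(3) 3] assms(4) by blast
  qed
qed

lemma restr_carrier: "A \<in> G \<Longrightarrow> \<Union>(restr G A) = A"
  unfolding restr_def by blast

lemma restr_restr: "Y \<subseteq> A \<Longrightarrow> restr (restr G A) Y = restr G Y"
  unfolding restr_def by blast

lemma restr_hypergraph: "hypergraph G \<Longrightarrow> hypergraph (restr G A)"
  unfolding hypergraph_def restr_def by simp

lemma restr_atomic: "atomic G \<Longrightarrow> atomic (restr G A)"
  unfolding atomic_def restr_def by blast

lemma restr_saturated: "saturated G \<Longrightarrow> saturated (restr G A)"
  unfolding saturated_def restr_def by blast

lemma atomic_restr_carrier: "atomic G \<Longrightarrow> \<Union>(restr G A) = \<Union>G \<inter> A"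
  unfolding atomic_def restr_def by blast

lemma trace_hypergraph:
  assumes "hypergraph G"
  shows "hypergraph (trace Z G)"
proof -
  have "trace Z G = (\<lambda>X. X \<inter> Z) ` {X \<in> G. X \<inter> Z \<noteq> {}}"
    unfolding trace_def by blast
  then show ?thesis using assms unfolding hypergraph_def by auto
qed

lemma trace_carrier: "\<Union>(trace Z G) = \<Union>G \<inter> Z"
  unfolding trace_def by blast

lemma trace_UN: "trace Z (\<Union>P) = (\<Union>B\<in>P. trace Z B)"
  unfolding trace_def by blast

lemma trace_cut: "trace (\<Union>G \<inter> Z) G = trace Z G"
  unfolding trace_def by blast

lemma trace_inside:
  assumes "hypergraph G" "\<Union>G \<subseteq> Z"
  shows "trace Z G = G"
proof -
  have inside: "X \<inter> Z = X" and nonempty: "X \<noteq> {}" if "X \<in> G" for X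
    using assms that unfolding hypergraph_def by blast+
  show ?thesis unfolding trace_def
  proof
    show "{X \<inter> Z |X. X \<in> G \<and> X \<inter> Z \<noteq> {}} \<subseteq> G" using inside by auto
    show "G \<subseteq> {X \<inter> Z |X. X \<in> G \<and> X \<inter> Z \<noteq> {}}"
    proof
      fix X assume "X \<in> G"
      then have "X = X \<inter> Z \<and> X \<in> G \<and> X \<inter> Z \<noteq> {}" using inside nonempty by simp
      then show "X \<in> {X \<inter> Z |X. X \<in> G \<and> X \<inter> Z \<noteq> {}}" by blast
    qed
  qed
qed

lemma trace_delete_point:
  "x \<in> Z \<Longrightarrow> trace (Z - {x}) (restr G (\<Union>G - {x})) = restr (trace Z G) (Z - {x})"
  unfolding trace_def restr_def by blast

lemma hunion_restr: "X \<union> Y \<subseteq> A \<Longrightarrow> hunion (restr G A) X Y = hunion G X Y"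
  unfolding hunion_def restr_def by auto

lemma saturated_Union_closed:
  assumes "saturated G" "finite F" "F \<noteq> {}" "F \<subseteq> G" "\<And>X. X \<in> F \<Longrightarrow> x \<in> X"
  shows "\<Union>F \<in> G"
  using assms(2-5)
proof (induction F rule: finite_ne_induct)
  case (singleton X)
  then show ?case by simp
next
  case (insert X F)
  then have "X \<in> G" "\<Union>F \<in> G" "x \<in> X \<inter> \<Union>F" using insert.hyps(2) by auto
  then have "X \<union> \<Union>F \<in> G" using assms(1) unfolding saturated_def by blast
  then show ?case by simp
qed

definition max_edge :: "'a set set \<Rightarrow> 'a \<Rightarrow> 'a set" where
  "max_edge G x = \<Union>{X \<in> G. x \<in> X}"

lemma max_edge_upper: "X \<in> G \<Longrightarrow> x \<in> X \<Longrightarrow> X \<subseteq> max_edge G x"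
  unfolding max_edge_def by blast

lemma max_edge_in:
  assumes "hypergraph G" "saturated G" "x \<in> \<Union>G"
  shows "max_edge G x \<in> G" and "x \<in> max_edge G x"
proof -
  have "finite {X \<in> G. x \<in> X}" using assms(1) unfolding hypergraph_def by simp
  moreover have "{X \<in> G. x \<in> X} \<noteq> {}" using assms(3) by blast
  ultimately show "max_edge G x \<in> G"
    unfolding max_edge_def by (rule saturated_Union_closed[OF assms(2)]) auto
  show "x \<in> max_edge G x" using assms(3) unfolding max_edge_def by blast
qed

lemma max_edge_absorbs:
  assumes "hypergraph G" "saturated G" "x \<in> \<Union>G" "X \<in> G" "X \<inter> max_edge G x \<noteq> {}"
  shows "X \<subseteq> max_edge G x"
proof -
  have "X \<union> max_edge G x \<in> G"
    using assms(2,4,5) max_edge_in(1)[OF assms(1-3)] unfolding saturated_def by blast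
  then have "X \<union> max_edge G x \<subseteq> max_edge G x"
    using max_edge_in(2)[OF assms(1-3)] by (intro max_edge_upper) auto
  then show ?thesis by blast
qed

lemma max_edge_disjoint:
  assumes "hypergraph G" "saturated G" "x \<in> \<Union>G" "y \<in> \<Union>G"
    and "max_edge G x \<inter> max_edge G y \<noteq> {}"
  shows "max_edge G x = max_edge G y"
proof -
  have "max_edge G x \<subseteq> max_edge G y"
    using assms by (intro max_edge_absorbs max_edge_in) auto
  moreover have "max_edge G y \<subseteq> max_edge G x"
    using assms by (intro max_edge_absorbs max_edge_in) auto
  ultimately show ?thesis by (rule antisym)
qed

definition components :: "'a set set \<Rightarrow> 'a set set set" where
  "components G = (\<lambda>z. restr G (max_edge G z)) ` \<Union>G"

definition full_partition :: "'a set set \<Rightarrow> 'a set set set \<Rightarrow> bool" where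
  "full_partition G P \<longleftrightarrow> hyp_partition G P \<and> (\<forall>B\<in>P. \<Union>B \<in> B)"

(* The blocks of a full partition are connected, so it is the finest partition. *)
lemma full_partition_finest:
  assumes "hypergraph G" "full_partition G P"
  shows "finest_partition G P"
proof -
  have P: "hyp_partition G P" using assms(2) unfolding full_partition_def by blast
  have "hconnected B" if "B \<in> P" for B
  proof (rule hconnected_if_top)
    have "B \<subseteq> G" using hyp_partitionD(1)[OF P] that by (metis Union_upper)
    then show "hypergraph B" by (rule hypergraph_subset[OF assms(1)])
    show "\<Union>B \<in> B" using assms(2) that unfolding full_partition_def by blast
  qed
  then show ?thesis using P unfolding finest_partition_def by blast
qed

lemma components_full_partition:
  assumes "hypergraph G" "saturated G"
  shows "full_partition G (components G)"
proof -
  let ?M = "max_edge G"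
  have block_full: "\<Union>(restr G (?M z)) \<in> restr G (?M z)" if "z \<in> \<Union>G" for z
  proof -
    have "?M z \<in> restr G (?M z)" using max_edge_in(1)[OF assms that] unfolding restr_def by simp
    then show ?thesis using restr_carrier[OF max_edge_in(1)[OF assms that]] by simp
  qed
  have "hyp_partition G (components G)"
  proof (rule hyp_partitionI[OF assms(1)])
    show "B \<noteq> {}" if "B \<in> components G" for B
      using that block_full unfolding components_def by blast
    show "\<Union>(components G) = G"
    proof
      show "\<Union>(components G) \<subseteq> G" unfolding components_def restr_def by blast
      show "G \<subseteq> \<Union>(components G)"
      proof
        fix X assume "X \<in> G"
        then obtain x where "x \<in> X" using assms(1) unfolding hypergraph_def by blast
        have "X \<in> restr G (?M x)"
          using \<open>X \<in> G\<close> max_edge_upper[OF \<open>X \<in> G\<close> \<open>x \<in> X\<close>] unfolding restr_def by simp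
        moreover have "x \<in> \<Union>G" using \<open>X \<in> G\<close> \<open>x \<in> X\<close> by blast
        ultimately show "X \<in> \<Union>(components G)" unfolding components_def by blast
      qed
    qed
    show "\<Union>B1 \<inter> \<Union>B2 = {}"
      if B12: "B1 \<in> components G" "B2 \<in> components G" "B1 \<noteq> B2" for B1 B2
    proof -
      obtain z1 z2 where z: "z1 \<in> \<Union>G" "z2 \<in> \<Union>G"
        and B: "B1 = restr G (?M z1)" "B2 = restr G (?M z2)"
        using B12(1,2) unfolding components_def by blast
      have "?M z1 \<noteq> ?M z2" using B12(3) unfolding B by metis
      then have "?M z1 \<inter> ?M z2 = {}" using max_edge_disjoint[OF assms z] by blast
      then show ?thesis
        using B restr_carrier[OF max_edge_in(1)[OF assms z(1)]]
          restr_carrier[OF max_edge_in(1)[OF assms z(2)]] by simp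
    qed
  qed
  moreover have "\<Union>B \<in> B" if "B \<in> components G" for B
    using that block_full unfolding components_def by blast
  ultimately show ?thesis unfolding full_partition_def by blast
qed

lemma trace_full_partition:
  assumes "hypergraph G" "full_partition G P"
  shows "full_partition (trace Z G) (trace Z ` P - {{}})"
proof -
  have P: "hyp_partition G P" using assms(2) unfolding full_partition_def by blast
  let ?Q = "trace Z ` P - {{}}"
  have top: "\<Union>B \<inter> Z \<in> trace Z B" if B: "B \<in> P" "trace Z B \<noteq> {}" for B
  proof -
    have "\<Union>B \<in> B" using assms(2) B(1) unfolding full_partition_def by blast
    moreover obtain W where "W \<in> trace Z B" using B(2) by blast
    then have "W \<noteq> {}" "W \<subseteq> \<Union>B \<inter> Z" using trace_carrier[of Z B] unfolding trace_def by auto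
    then have "\<Union>B \<inter> Z \<noteq> {}" by blast
    ultimately show ?thesis unfolding trace_def by blast
  qed
  have "hyp_partition (trace Z G) ?Q"
  proof (rule hyp_partitionI[OF trace_hypergraph[OF assms(1)]])
    show "C \<noteq> {}" if "C \<in> ?Q" for C using that by blast
    have "(\<Union>B\<in>P. trace Z B) = trace Z G"
      using trace_UN[of Z P] hyp_partitionD(1)[OF P] by simp
    moreover have "\<Union>?Q = (\<Union>B\<in>P. trace Z B)" by blast
    ultimately show "\<Union>?Q = trace Z G" by simp
    show "\<Union>C1 \<inter> \<Union>C2 = {}" if C12: "C1 \<in> ?Q" "C2 \<in> ?Q" "C1 \<noteq> C2" for C1 C2
    proof -
      obtain B1 B2 where B: "B1 \<in> P" "B2 \<in> P" "C1 = trace Z B1" "C2 = trace Z B2"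
        using C12(1,2) by blast
      then have "B1 \<noteq> B2" using C12(3) by blast
      then have "\<Union>B1 \<inter> \<Union>B2 = {}" by (rule hyp_partitionD(4)[OF P B(1,2)])
      moreover have "\<Union>C1 \<subseteq> \<Union>B1" "\<Union>C2 \<subseteq> \<Union>B2" using B(3,4) trace_carrier[of Z] by auto
      ultimately show ?thesis by blast
    qed
  qed
  moreover have "\<Union>C \<in> C" if C: "C \<in> ?Q" for C
  proof -
    obtain B where "B \<in> P" "C = trace Z B" "C \<noteq> {}" using C by blast
    then show ?thesis using top[of B] trace_carrier[of Z B] by simp
  qed
  ultimately show ?thesis unfolding full_partition_def by blast
qed

definition continuation :: "'a set set \<Rightarrow> 'a set \<Rightarrow> 'a set set \<Rightarrow> 'a set set \<Rightarrow> 'a set set" where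
  "continuation H Y K J = K \<union> (\<lambda>X. hunion H X Y) ` J"

definition continuation_property :: "'a set set \<Rightarrow> bool" where
  "continuation_property H \<longleftrightarrow>
     (\<forall>Y K J. Y \<in> H \<longrightarrow> construction (restr H Y) K \<longrightarrow> construction (trace (\<Union>H - Y) H) J
        \<longrightarrow> construction H (continuation H Y K J))"

lemma continuation_restr:
  assumes "\<And>X. X \<in> J \<Longrightarrow> X \<union> Y \<subseteq> A"
  shows "continuation (restr H A) Y K J = continuation H Y K J"
  using assms hunion_restr unfolding continuation_def by (metis (no_types, lifting) image_cong)

(* Either Y = \<Union>H and J is empty, or J ends with the top edge Z of
   _Z H, which the continuation turns into \<Union>H, preceded by a construction of a trace of H_{\<Union>H-{x}}. *)
lemma continuation_connected:
  assumes hH: "hypergraph H" and aH: "atomic H" and top: "\<Union>H \<in> H"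
    and IH: "\<And>A. A \<subset> \<Union>H \<Longrightarrow> continuation_property (restr H A)"
    and Y: "Y \<in> H" and K: "construction (restr H Y) K"
    and J: "construction (trace (\<Union>H - Y) H) J"
  shows "construction H (continuation H Y K J)"
proof (cases "Y = \<Union>H")
  case True
  then have "trace (\<Union>H - Y) H = {}" unfolding trace_def by blast
  then have "J = {}" using J construction_of_empty by simp
  moreover have "restr H Y = H" using True unfolding restr_def by blast
  ultimately show ?thesis using K unfolding continuation_def by simp
next
  case False
  define Z where "Z = \<Union>H - Y"
  have "Y \<subseteq> \<Union>H" using Y by blast
  then have "Z \<noteq> {}" using False unfolding Z_def by blast
  have Z_top: "\<Union>(trace Z H) = Z" "Z \<in> trace Z H"
    using top \<open>Z \<noteq> {}\<close> trace_carrier[of Z H] unfolding Z_def trace_def by auto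
  obtain x J' where x: "x \<in> Z" and J': "construction (restr (trace Z H) (Z - {x})) J'"
    and J_eq: "J = J' \<union> {Z}"
    using construction_of_full[OF J[folded Z_def]] Z_top by metis
  define A where "A = \<Union>H - {x}"
  have "x \<in> \<Union>H" "x \<notin> Y" using x unfolding Z_def by auto
  then have "A \<subset> \<Union>H" and YA: "Y \<subseteq> A" using \<open>Y \<subseteq> \<Union>H\<close> unfolding A_def by auto
  have "Y \<in> restr H A" using Y YA unfolding restr_def by simp
  moreover have "restr (restr H A) Y = restr H Y" by (rule restr_restr[OF YA])
  moreover have "\<Union>(restr H A) - Y = Z - {x}"
    using atomic_restr_carrier[OF aH, of A] unfolding A_def Z_def by auto
  then have "trace (\<Union>(restr H A) - Y) (restr H A) = restr (trace Z H) (Z - {x})"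
    using trace_delete_point[OF x] unfolding A_def by simp
  ultimately have "construction (restr H A) (continuation (restr H A) Y K J')"
    using IH[OF \<open>A \<subset> \<Union>H\<close>] K J' unfolding continuation_property_def by simp
  moreover have "continuation (restr H A) Y K J' = continuation H Y K J'"
  proof (rule continuation_restr)
    fix X assume "X \<in> J'"
    then have "X \<subseteq> \<Union>(restr (trace Z H) (Z - {x}))" by (rule construction_edges(2)[OF J'])
    also have "\<dots> \<subseteq> Z - {x}" unfolding restr_def by blast
    finally show "X \<union> Y \<subseteq> A" using YA unfolding A_def Z_def by blast
  qed
  moreover have "card (\<Union>H) \<ge> 1"
    using hypergraph_finite_carrier[OF hH] \<open>x \<in> \<Union>H\<close> by (metis One_nat_def Suc_leI card_gt_0_iff empty_iff)
  ultimately have "construction H (continuation H Y K J' \<union> {\<Union>H})"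
    using construction.conn[OF hH aH _ hconnected_if_top[OF hH top] \<open>x \<in> \<Union>H\<close>]
    unfolding A_def by simp
  moreover have "hunion H Z Y = \<Union>H"
    using top \<open>Y \<subseteq> \<Union>H\<close> unfolding hunion_def Z_def by (simp add: Un_absorb2)
  ultimately show ?thesis using J_eq unfolding continuation_def by (simp add: Un_assoc)
qed

lemma construction_of_trace_decomp:
  assumes "hypergraph H" "full_partition H P" "construction (trace Z H) J"
  obtains Jt where "\<And>B. B \<in> P \<Longrightarrow> construction (trace Z B) (Jt B)" "J = (\<Union>B\<in>P. Jt B)"
proof -
  have "finest_partition (trace Z H) (trace Z ` P - {{}})"
    using trace_full_partition[OF assms(1,2)] by (rule full_partition_finest[OF trace_hypergraph[OF assms(1)]])
  then obtain Jt where "\<And>B'. B' \<in> trace Z ` P \<Longrightarrow> construction B' (Jt B')"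
    and "J = (\<Union>B'\<in>trace Z ` P. Jt B')"
    using construction_decomp assms(3) by metis
  then show ?thesis using that[of "\<lambda>B. Jt (trace Z B)"] by (simp add: image_image)
qed

lemma hunion_away:
  assumes "hypergraph H" "saturated H" "y \<in> Y" "Y \<subseteq> max_edge H y" "y \<in> \<Union>H"
    and "X \<noteq> {}" "X \<inter> max_edge H y = {}"
  shows "hunion H X Y = X"
proof -
  have "X \<union> Y \<notin> H"
  proof
    assume XY: "X \<union> Y \<in> H"
    have "(X \<union> Y) \<inter> max_edge H y \<noteq> {}" using assms(3,4) by blast
    then have "X \<union> Y \<subseteq> max_edge H y" by (rule max_edge_absorbs[OF assms(1,2,5) XY])
    then show False using assms(6,7) by blast
  qed
  then show ?thesis unfolding hunion_def by simp
qed

lemma continuation_on_component: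
  assumes "M \<in> H" "Y \<in> H" "Y \<subseteq> M" "continuation_property (restr H M)"
    and "construction (restr H Y) K" "construction (trace (\<Union>H - Y) (restr H M)) J"
  shows "construction (restr H M) (continuation H Y K J)"
proof -
  let ?C = "restr H M"
  have carrier: "\<Union>?C = M" by (rule restr_carrier[OF assms(1)])
  have "M \<subseteq> \<Union>H" using assms(1) by blast
  then have "\<Union>?C - Y = \<Union>?C \<inter> (\<Union>H - Y)" unfolding carrier by blast
  then have "trace (\<Union>?C - Y) ?C = trace (\<Union>H - Y) ?C" by (simp add: trace_cut)
  moreover have "Y \<in> ?C" using assms(2,3) unfolding restr_def by simp
  moreover have "restr ?C Y = restr H Y" by (rule restr_restr[OF assms(3)])
  ultimately have "construction ?C (continuation ?C Y K J)"
    using assms(4-6) unfolding continuation_property_def by simp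
  moreover have "continuation ?C Y K J = continuation H Y K J"
  proof (rule continuation_restr)
    fix X assume "X \<in> J"
    then have "X \<subseteq> \<Union>(trace (\<Union>H - Y) ?C)" by (rule construction_edges(2)[OF assms(6)])
    then show "X \<union> Y \<subseteq> M" unfolding trace_carrier carrier using assms(3) by blast
  qed
  ultimately show ?thesis by simp
qed

lemma continuation_blockwise:
  assumes "C \<in> P" "J = (\<Union>B\<in>P. Jt B)"
    and "\<And>B X. B \<in> P \<Longrightarrow> B \<noteq> C \<Longrightarrow> X \<in> Jt B \<Longrightarrow> hunion H X Y = X"
  shows "(\<Union>B\<in>P. if B = C then continuation H Y K (Jt C) else Jt B) = continuation H Y K J"
proof -
  have split: "(\<Union>B\<in>P. g B) = g C \<union> (\<Union>B\<in>P - {C}. g B)" for g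
    using assms(1) by (metis UN_insert insert_Diff)
  have "(\<lambda>X. hunion H X Y) ` (\<Union>B\<in>P - {C}. Jt B) = (\<Union>B\<in>P - {C}. Jt B)"
    using assms(3) by force
  moreover have "(\<Union>B\<in>P - {C}. if B = C then continuation H Y K (Jt C) else Jt B)
      = (\<Union>B\<in>P - {C}. Jt B)"
    by (rule SUP_cong) simp_all
  ultimately show ?thesis
    unfolding assms(2) split[of Jt] split[of "\<lambda>B. if B = C then _ else Jt B"]
    unfolding continuation_def by (simp add: image_Un Un_assoc)
qed

(* Induction step when \<Union>H \<notin> H: continue inside the component of Y (a proper restriction),
   keep the other components, which lie in Z and are traced unchanged, and reassemble. *)
lemma continuation_disconnected:
  assumes hH: "hypergraph H" and aH: "atomic H" and sH: "saturated H" and top: "\<Union>H \<notin> H"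
    and IH: "\<And>A. A \<subset> \<Union>H \<Longrightarrow> continuation_property (restr H A)"
    and Y: "Y \<in> H" and K: "construction (restr H Y) K"
    and J: "construction (trace (\<Union>H - Y) H) J"
  shows "construction H (continuation H Y K J)"
proof -
  define Z where "Z = \<Union>H - Y"
  let ?P = "components H"
  obtain y where "y \<in> Y" using Y hH unfolding hypergraph_def by blast
  then have y: "y \<in> \<Union>H" using Y by blast
  define M where "M = max_edge H y"
  define C where "C = restr H M"
  have M: "M \<in> H" "Y \<subseteq> M"
    using max_edge_in(1)[OF hH sH y] max_edge_upper[OF Y \<open>y \<in> Y\<close>] unfolding M_def by auto
  then have "M \<subset> \<Union>H" using top by (metis Union_upper psubsetI)
  have P_full: "full_partition H ?P" by (rule components_full_partition[OF hH sH])
  then have P: "hyp_partition H ?P" unfolding full_partition_def by blast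
  have C_in: "C \<in> ?P" using y unfolding components_def C_def M_def by blast
  have away: "\<Union>B \<inter> M = {}" "B \<subseteq> H" if "B \<in> ?P" "B \<noteq> C" for B
    using hyp_partitionD(4)[OF P that(1) C_in that(2)] restr_carrier[OF M(1)]
      hyp_partitionD(1)[OF P] that(1) unfolding C_def by (simp, metis Union_upper)
  have untouched: "trace Z B = B" if "B \<in> ?P" "B \<noteq> C" for B
    using away[OF that] M(2) unfolding Z_def
    by (intro trace_inside hypergraph_subset[OF hH]) auto
  obtain Jt where Jt: "\<And>B. B \<in> ?P \<Longrightarrow> construction (trace Z B) (Jt B)"
    and J_eq: "J = (\<Union>B\<in>?P. Jt B)"
    using construction_of_trace_decomp[OF hH P_full J[folded Z_def]] by blast
  have fixed: "hunion H X Y = X" if "B \<in> ?P" "B \<noteq> C" "X \<in> Jt B" for B X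
  proof (rule hunion_away[OF hH sH \<open>y \<in> Y\<close> M(2)[unfolded M_def] y])
    have "construction B (Jt B)" using Jt[OF that(1)] untouched[OF that(1,2)] by simp
    then show "X \<noteq> {}" "X \<inter> max_edge H y = {}"
      using construction_edges[OF _ that(3)] away(1)[OF that(1,2)] unfolding M_def by blast+
  qed
  have C_step: "construction C (continuation H Y K (Jt C))"
    using continuation_on_component[OF M(1) Y M(2) IH[OF \<open>M \<subset> \<Union>H\<close>] K] Jt[OF C_in]
    unfolding C_def Z_def by blast
  have "construction H (\<Union>B\<in>?P. if B = C then continuation H Y K (Jt C) else Jt B)"
  proof (rule construction_from_blocks[OF hH aH full_partition_finest[OF hH P_full]])
    fix B assume "B \<in> ?P"
    then show "construction B (if B = C then continuation H Y K (Jt C) else Jt B)"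
      using C_step Jt[of B] untouched[of B] by (cases "B = C") simp_all
  qed
  then show ?thesis using continuation_blockwise[OF C_in J_eq fixed] by simp
qed

(* The continuation property for all atomic saturated hypergraphs, by induction on the
   size of the carrier; proper restrictions H_A are again atomic and saturated. *)
theorem continuation_property_saturated:
  assumes "hypergraph H" "atomic H" "saturated H"
  shows "continuation_property H"
  using assms
proof (induction "card (\<Union>H)" arbitrary: H rule: less_induct)
  case less
  have IH: "continuation_property (restr H A)" if "A \<subset> \<Union>H" for A
  proof (rule less.hyps)
    have "\<Union>(restr H A) \<subset> \<Union>H" using that unfolding restr_def by blast
    then show "card (\<Union>(restr H A)) < card (\<Union>H)"
      by (rule psubset_card_mono[OF hypergraph_finite_carrier[OF less.prems(1)]])
  qed (use less.prems restr_hypergraph restr_atomic restr_saturated in auto)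
  show ?case
    unfolding continuation_property_def
    using continuation_connected[OF less.prems(1,2) _ IH]
      continuation_disconnected[OF less.prems(1-3) _ IH] by blast
qed

theorem proposition7p5:
  fixes H :: "'a set set" and Y Z :: "'a set" and K J :: "'a set set"
  assumes "ASC H"
    and "Y \<in> H"
    and "Z = \<Union>H - Y"
    and "construction (restr H Y) K"
    and "construction (trace Z H) J"
  shows "construction H (K \<union> {hunion H X Y | X. X \<in> J})"
proof -
  have "continuation_property H"
    using assms(1) continuation_property_saturated unfolding ASC_def by blast
  then have "construction H (continuation H Y K J)"
    using assms(2-5) unfolding continuation_property_def by blast
  moreover have "continuation H Y K J = K \<union> {hunion H X Y | X. X \<in> J}"
    unfolding continuation_def by blast
  ultimately show ?thesis by simp
qed

end
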